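(* Let $m,n$ be nonzero integers with $|m|<|n|$, and let $u$ be a vertex of $\Lambda_{m,n}$. Then $u$ is of type $a$ if and only if there exists a finite set $V_u$ of vertices of $\Lambda_{m,n}$, each at distance $2$ from $u$, such that $\mathrm{lk}_\Lambda(u)\subseteq \bigcup_{v\in V_u} \mathrm{lk}_\Lambda(v)$.
   Context: $\mathrm{BS}(m,n)=\langle a,t\mid ta^mt^{-1}=a^n\rangle$; its Cayley graph $\Upsilon_{m,n}$ for $\{a,t\}$ has $a$-lines (subgraphs spanned by left cosets $g\langle a\rangle$) and $t$-lines (spanned by left cosets $g\langle t\rangle$), called standard lines. $\Lambda_{m,n}$ is the graph with one vertex per standard line, two vertices being adjacent if the corresponding lines intersect; the type of a vertex is $a$ or $t$ according to the label of its line. $\Lambda_{m,n}$ has the path metric with edges of length $1$, and $\mathrm{lk}_\Lambda(u)$ denotes the set of vertices at distance $1$ from $u$. *)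

theory Defs
  imports Main
begin

datatype gen = GA | GT

text \<open>A letter is a generator with an exponent sign (True = +1, False = -1).\<close>
type_synonym letter = "gen \<times> bool"
type_synonym word = "letter list"

definition apow :: "int \<Rightarrow> word" where
  "apow k = (if 0 \<le> k then replicate (nat k) (GA, True) else replicate (nat (- k)) (GA, False))"

definition tpow :: "int \<Rightarrow> word" where
  "tpow k = (if 0 \<le> k then replicate (nat k) (GT, True) else replicate (nat (- k)) (GT, False))"

inductive beq :: "int \<Rightarrow> int \<Rightarrow> word \<Rightarrow> word \<Rightarrow> bool" for m n where
  beq_refl: "beq m n w w"
| beq_sym: "beq m n w v \<Longrightarrow> beq m n v w"
| beq_trans: "beq m n u v \<Longrightarrow> beq m n v w \<Longrightarrow> beq m n u w"
| beq_cancel: "beq m n (u @ [(g, b), (g, \<not> b)] @ v) (u @ v)"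
| beq_rel: "beq m n (u @ [(GT, True)] @ apow m @ [(GT, False)] @ v) (u @ apow n @ v)"

text \<open>Group elements = equivalence classes of words.\<close>
definition elt :: "int \<Rightarrow> int \<Rightarrow> word \<Rightarrow> word set" where
  "elt m n w = {v. beq m n w v}"

datatype ltype = TypeA | TypeT

definition aline :: "int \<Rightarrow> int \<Rightarrow> word \<Rightarrow> word set set" where
  "aline m n w = {elt m n (w @ apow k) | k. True}"

definition tline :: "int \<Rightarrow> int \<Rightarrow> word \<Rightarrow> word set set" where
  "tline m n w = {elt m n (w @ tpow k) | k. True}"

text \<open>Vertices of Lambda: standard lines, recorded as (type, set of group elements).\<close>
definition LVerts :: "int \<Rightarrow> int \<Rightarrow> (ltype \<times> word set set) set" where
  "LVerts m n = {(TypeA, aline m n w) | w. True} \<union> {(TypeT, tline m n w) | w. True}"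

definition ladj :: "int \<Rightarrow> int \<Rightarrow> ltype \<times> word set set \<Rightarrow> ltype \<times> word set set \<Rightarrow> bool" where
  "ladj m n u v \<longleftrightarrow> u \<in> LVerts m n \<and> v \<in> LVerts m n \<and> u \<noteq> v \<and> snd u \<inter> snd v \<noteq> {}"

inductive lwalk :: "int \<Rightarrow> int \<Rightarrow> ltype \<times> word set set \<Rightarrow> ltype \<times> word set set \<Rightarrow> nat \<Rightarrow> bool"
  for m n where
  lwalk_nil: "u \<in> LVerts m n \<Longrightarrow> lwalk m n u u 0"
| lwalk_cons: "ladj m n u w \<Longrightarrow> lwalk m n w v k \<Longrightarrow> lwalk m n u v (Suc k)"

definition ldist_is :: "int \<Rightarrow> int \<Rightarrow> ltype \<times> word set set \<Rightarrow> ltype \<times> word set set \<Rightarrow> nat \<Rightarrow> bool" where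
  "ldist_is m n u v d \<longleftrightarrow> lwalk m n u v d \<and> (\<forall>k<d. \<not> lwalk m n u v k)"

definition lk :: "int \<Rightarrow> int \<Rightarrow> ltype \<times> word set set \<Rightarrow> (ltype \<times> word set set) set" where
  "lk m n u = {v. ldist_is m n u v 1}"

end

theory Submission
  imports Defs Complex_Main
begin

text \<open>Map BS(m,n) to the affine group of the real line by \<open>a \<mapsto> (x \<mapsto> x + 1)\<close> and
  \<open>t \<mapsto> (x \<mapsto> (n/m) x)\<close>, and read off from the image of \<open>g\<close> a scale and a shift.

  The link of an a-line \<open>g\<langle>a\<rangle>\<close> consists of the t-lines \<open>g a\<^sup>k\<langle>t\<rangle>\<close>. Writing
  \<open>k = i + m q\<close> with \<open>i\<close> ranging over \<open>|m|\<close> residues, \<open>g a\<^sup>k t\<^sup>-\<^sup>1 = g a\<^sup>i t\<^sup>-\<^sup>1 a\<^sup>n\<^sup>q\<close>,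
  so the a-lines \<open>g a\<^sup>i t\<^sup>-\<^sup>1\<langle>a\<rangle>\<close> cover the link; they are at distance 2 because their scale
  differs from that of \<open>g\<langle>a\<rangle>\<close> by the factor \<open>m/n \<noteq> 1\<close>.

  The link of a t-line \<open>g\<langle>t\<rangle>\<close> consists of the a-lines \<open>g t\<^sup>l\<langle>a\<rangle>\<close>, whose scale grows like
  \<open>|n/m|\<^sup>l\<close>. Any other line meets \<open>g t\<^sup>l\<langle>a\<rangle>\<close> only if \<open>|n/m|\<^sup>l\<close> is bounded by a constant of
  that line: its scale for an a-line, its shift distance from \<open>g\<close> for a t-line (which meets
  \<open>g t\<^sup>l\<langle>a\<rangle>\<close> at some \<open>g t\<^sup>l a\<^sup>k\<close> with \<open>k \<noteq> 0\<close>). So finitely many lines only reach the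
  \<open>g t\<^sup>l\<langle>a\<rangle>\<close> with \<open>l\<close> bounded above.\<close>

section \<open>Equality of words in BS(m,n)\<close>

lemmas [trans] = beq.beq_trans

lemma beq_append_right: "beq m n w v \<Longrightarrow> beq m n (w @ z) (v @ z)"
proof (induction rule: beq.induct)
  case (beq_cancel u g b v)
  then show ?case using beq.beq_cancel[of m n u g b "v @ z"] by simp
next
  case (beq_rel u v)
  then show ?case using beq.beq_rel[of m n u "v @ z"] by simp
qed (auto intro: beq.intros)

lemma beq_append_left: "beq m n w v \<Longrightarrow> beq m n (z @ w) (z @ v)"
proof (induction rule: beq.induct)
  case (beq_cancel u g b v)
  then show ?case using beq.beq_cancel[of m n "z @ u" g b v] by simp
next
  case (beq_rel u v)
  then show ?case using beq.beq_rel[of m n "z @ u" v] by simp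
qed (auto intro: beq.intros)

lemma beq_append_cong: "beq m n w v \<Longrightarrow> beq m n (x @ w @ y) (x @ v @ y)"
  by (intro beq_append_left beq_append_right)

lemma elt_eq_iff: "elt m n w = elt m n v \<longleftrightarrow> beq m n w v"
proof
  assume "elt m n w = elt m n v"
  then show "beq m n w v"
    using beq.beq_refl[of m n v] by (auto simp: elt_def)
next
  assume "beq m n w v"
  then show "elt m n w = elt m n v"
    by (auto simp: elt_def intro: beq.beq_trans beq.beq_sym)
qed

definition gpow :: "gen \<Rightarrow> int \<Rightarrow> word" where
  "gpow G k = (if 0 \<le> k then replicate (nat k) (G, True) else replicate (nat (- k)) (G, False))"

lemma apow_eq_gpow: "apow = gpow GA" and tpow_eq_gpow: "tpow = gpow GT"
  by (auto simp: fun_eq_iff apow_def tpow_def gpow_def)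

lemma gpow_0 [simp]: "gpow G 0 = []"
  by (simp add: gpow_def)

lemma gpow_minus_1: "gpow G (-1) = [(G, False)]"
  by (simp add: gpow_def)

lemma gpow_succ: "beq m n (gpow G k @ [(G, True)]) (gpow G (k + 1))"
proof (cases "0 \<le> k")
  case True
  then have "gpow G (k + 1) = gpow G k @ [(G, True)]"
    by (simp add: gpow_def nat_add_distrib replicate_append_same)
  then show ?thesis by (simp add: beq.beq_refl)
next
  case False
  then have "gpow G k = replicate (nat (- k - 1)) (G, False) @ [(G, False)]"
    and "gpow G (k + 1) = replicate (nat (- k - 1)) (G, False)"
    by (simp_all add: gpow_def replicate_append_same flip: replicate_Suc Suc_nat_eq_nat_zadd1)
  then show ?thesis
    using beq.beq_cancel[of m n "replicate (nat (- k - 1)) (G, False)" G False "[]"] by simp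
qed

lemma gpow_pred: "beq m n (gpow G k @ [(G, False)]) (gpow G (k - 1))"
proof (cases "0 < k")
  case False
  then have "nat (- (k - 1)) = Suc (nat (- k))" by simp
  with False have "gpow G (k - 1) = gpow G k @ [(G, False)]"
    by (simp add: gpow_def replicate_append_same)
  then show ?thesis by (simp add: beq.beq_refl)
next
  case True
  then have "gpow G k = replicate (nat (k - 1)) (G, True) @ [(G, True)]"
    and "gpow G (k - 1) = replicate (nat (k - 1)) (G, True)"
    by (simp_all add: gpow_def replicate_append_same flip: replicate_Suc Suc_nat_eq_nat_zadd1)
  then show ?thesis
    using beq.beq_cancel[of m n "replicate (nat (k - 1)) (G, True)" G True "[]"] by simp
qed

lemma gpow_add: "beq m n (gpow G i @ gpow G j) (gpow G (i + j))"
proof (induction j rule: int_induct[where k = 0])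
  case base
  then show ?case by (simp add: beq.beq_refl)
next
  case (step1 j)
  then have "gpow G (j + 1) = gpow G j @ [(G, True)]"
    by (simp add: gpow_def nat_add_distrib replicate_append_same)
  moreover have "beq m n (gpow G i @ gpow G j @ [(G, True)]) (gpow G (i + j) @ [(G, True)])"
    using beq_append_right[OF step1.IH] by simp
  ultimately show ?case
    using gpow_succ[of m n G "i + j"] by (auto simp: add.assoc intro: beq.beq_trans)
next
  case (step2 j)
  then have "nat (- (j - 1)) = Suc (nat (- j))" by simp
  with step2 have "gpow G (j - 1) = gpow G j @ [(G, False)]"
    by (simp add: gpow_def replicate_append_same)
  moreover have "beq m n (gpow G i @ gpow G j @ [(G, False)]) (gpow G (i + j) @ [(G, False)])"
    using beq_append_right[OF step2.IH] by simp
  ultimately show ?case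
    using gpow_pred[of m n G "i + j"] by (auto simp: add_diff_eq intro: beq.beq_trans)
qed

lemma gpow_cancel: "beq m n (gpow G k @ gpow G (- k)) []"
  using gpow_add[of m n G k "- k"] by simp

lemma beq_conj_gpow_add:
  assumes "beq m n (x @ gpow G k) (gpow G k' @ x)"
    and "beq m n (x @ gpow G i) (gpow G i' @ x)"
  shows "beq m n (x @ gpow G (i + k)) (gpow G (i' + k') @ x)"
proof -
  have "beq m n (x @ gpow G (i + k)) (x @ gpow G i @ gpow G k)"
    using beq_append_left[OF gpow_add, of m n x G i k] by (rule beq.beq_sym)
  also have "beq m n \<dots> (gpow G i' @ x @ gpow G k)"
    using beq_append_right[OF assms(2), of "gpow G k"] by simp
  also have "beq m n \<dots> (gpow G i' @ gpow G k' @ x)"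
    using beq_append_left[OF assms(1), of "gpow G i'"] .
  also have "beq m n \<dots> (gpow G (i' + k') @ x)"
    using beq_append_right[OF gpow_add, of m n G i' k' x] by simp
  finally show ?thesis .
qed

lemma beq_conj_gpow_uminus:
  assumes "beq m n (x @ gpow G k) (gpow G k' @ x)"
  shows "beq m n (x @ gpow G (- k)) (gpow G (- k') @ x)"
proof -
  have "beq m n (x @ gpow G (- k)) (gpow G (- k') @ gpow G k' @ x @ gpow G (- k))"
    using beq_append_right[OF gpow_cancel[of m n G "- k'"], of "x @ gpow G (- k)"]
    by (simp add: beq.beq_sym)
  also have "beq m n \<dots> (gpow G (- k') @ x @ gpow G k @ gpow G (- k))"
    using beq_append_cong[OF beq.beq_sym[OF assms], of "gpow G (- k')" "gpow G (- k)"] by simp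
  also have "beq m n \<dots> (gpow G (- k') @ x)"
    using beq_append_left[OF gpow_cancel[of m n G k], of "gpow G (- k') @ x"] by simp
  finally show ?thesis .
qed

lemma beq_conj_gpow_mult:
  assumes "beq m n (x @ gpow G k) (gpow G k' @ x)"
  shows "beq m n (x @ gpow G (k * q)) (gpow G (k' * q) @ x)"
proof (induction q rule: int_induct[where k = 0])
  case base
  then show ?case by (simp add: beq.beq_refl)
next
  case (step1 q)
  then show ?case
    using beq_conj_gpow_add[OF assms step1.IH] by (simp add: distrib_left)
next
  case (step2 q)
  then show ?case
    using beq_conj_gpow_add[OF beq_conj_gpow_uminus[OF assms] step2.IH] by (simp add: right_diff_distrib)
qed

lemma beq_tinv_apow_mult: "beq m n ((GT, False) # apow (n * q)) (apow (m * q) @ [(GT, False)])"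
proof -
  have "beq m n ([(GT, False)] @ apow n) ([(GT, False)] @ [(GT, True)] @ apow m @ [(GT, False)])"
    using beq_append_left[OF beq.beq_sym[OF beq.beq_rel[of m n "[]" "[]"]], of "[(GT, False)]"]
    by simp
  also have "beq m n \<dots> (apow m @ [(GT, False)])"
    using beq.beq_cancel[of m n "[]" GT False "apow m @ [(GT, False)]"] by simp
  finally show ?thesis
    using beq_conj_gpow_mult[of m n "[(GT, False)]"] by (simp add: apow_eq_gpow)
qed

definition gline :: "int \<Rightarrow> int \<Rightarrow> gen \<Rightarrow> word \<Rightarrow> word set set" where
  "gline m n G w = {elt m n (w @ gpow G k) | k. True}"

lemma aline_eq_gline: "aline m n w = gline m n GA w"
  and tline_eq_gline: "tline m n w = gline m n GT w"
  by (simp_all add: aline_def tline_def gline_def apow_eq_gpow tpow_eq_gpow)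

lemma gline_subset:
  assumes "elt m n (h @ gpow G k') = elt m n (g @ gpow G k)"
  shows "gline m n G h \<subseteq> gline m n G g"
proof
  fix X assume "X \<in> gline m n G h"
  then obtain j where X: "X = elt m n (h @ gpow G j)" by (auto simp: gline_def)
  have hg: "beq m n (h @ gpow G k') (g @ gpow G k)" using assms by (simp add: elt_eq_iff)
  have "beq m n (h @ gpow G j) (h @ gpow G k' @ gpow G (j - k'))"
    using beq_append_left[OF gpow_add[of m n G k' "j - k'"], of h] by (simp add: beq.beq_sym)
  also have "beq m n \<dots> (g @ gpow G k @ gpow G (j - k'))"
    using beq_append_right[OF hg, of "gpow G (j - k')"] by simp
  also have "beq m n \<dots> (g @ gpow G (k + (j - k')))"
    by (rule beq_append_left[OF gpow_add])
  finally show "X \<in> gline m n G g"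
    using X by (auto simp: gline_def elt_eq_iff)
qed

lemma gline_eq_if_meet:
  assumes "gline m n G h \<inter> gline m n G g \<noteq> {}"
  shows "gline m n G h = gline m n G g"
proof -
  obtain k k' where meet: "elt m n (h @ gpow G k') = elt m n (g @ gpow G k)"
    using assms by (auto simp: gline_def)
  show ?thesis
    using gline_subset[OF meet] gline_subset[OF meet [symmetric]] by (rule equalityI)
qed

lemma aline_eq_if_meet: "aline m n h \<inter> aline m n g \<noteq> {} \<Longrightarrow> aline m n h = aline m n g"
  and tline_eq_if_meet: "tline m n h \<inter> tline m n g \<noteq> {} \<Longrightarrow> tline m n h = tline m n g"
  unfolding aline_eq_gline tline_eq_gline by (fact gline_eq_if_meet)+

lemma elt_in_aline: "elt m n (h @ apow k) \<in> aline m n h"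
  and elt_in_tline: "elt m n (h @ tpow k) \<in> tline m n h"
  by (auto simp: aline_def tline_def)

lemma elt_in_aline_self: "elt m n h \<in> aline m n h"
  and elt_in_tline_self: "elt m n h \<in> tline m n h"
  using elt_in_aline[of m n h 0] elt_in_tline[of m n h 0] by (simp_all add: apow_def tpow_def)

lemma LVerts_cases:
  assumes "x \<in> LVerts m n"
  obtains h where "x = (TypeA, aline m n h)" | h where "x = (TypeT, tline m n h)"
  using assms by (auto simp: LVerts_def)

lemma aline_in_LVerts: "(TypeA, aline m n h) \<in> LVerts m n"
  and tline_in_LVerts: "(TypeT, tline m n h) \<in> LVerts m n"
  by (auto simp: LVerts_def)

section \<open>An affine representation\<close>

definition bs_ratio :: "int \<Rightarrow> int \<Rightarrow> real" where
  "bs_ratio m n = real_of_int n / real_of_int m"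

text \<open>A pair \<open>(s, c)\<close> stands for the affine map \<open>x \<mapsto> s x + c\<close>.\<close>

definition aff_comp :: "real \<times> real \<Rightarrow> real \<times> real \<Rightarrow> real \<times> real" where
  "aff_comp f g = (fst f * fst g, fst f * snd g + snd f)"

fun letter_aff :: "int \<Rightarrow> int \<Rightarrow> letter \<Rightarrow> real \<times> real" where
  "letter_aff m n (GA, b) = (1, if b then 1 else -1)"
| "letter_aff m n (GT, b) = (if b then bs_ratio m n else inverse (bs_ratio m n), 0)"

fun word_aff :: "int \<Rightarrow> int \<Rightarrow> word \<Rightarrow> real \<times> real" where
  "word_aff m n [] = (1, 0)"
| "word_aff m n (l # w) = aff_comp (letter_aff m n l) (word_aff m n w)"

lemma word_aff_append: "word_aff m n (u @ v) = aff_comp (word_aff m n u) (word_aff m n v)"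
  by (induction u) (auto simp: aff_comp_def algebra_simps)

lemma word_aff_apow: "word_aff m n (apow k) = (1, of_int k)"
proof -
  have "word_aff m n (replicate j (GA, b)) = (1, of_nat j * (if b then 1 else -1))" for j b
    by (induction j) (auto simp: aff_comp_def algebra_simps)
  then show ?thesis by (auto simp: apow_def)
qed

lemma word_aff_tpow: "word_aff m n (tpow k) = (bs_ratio m n powi k, 0)"
proof -
  have "word_aff m n (replicate j (GT, b)) =
      ((if b then bs_ratio m n else inverse (bs_ratio m n)) ^ j, 0)" for j b
    by (induction j) (auto simp: aff_comp_def algebra_simps)
  then show ?thesis by (auto simp: tpow_def power_int_def power_inverse)
qed

lemma word_aff_beq:
  assumes "beq m n w v" and "m \<noteq> 0" and "n \<noteq> 0"
  shows "word_aff m n w = word_aff m n v"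
  using assms(1)
proof (induction rule: beq.induct)
  case (beq_cancel u g b v)
  have "aff_comp (letter_aff m n (g, b)) (aff_comp (letter_aff m n (g, \<not> b)) f) = f" for f
    using assms(2,3) by (cases g; cases b) (auto simp: aff_comp_def bs_ratio_def)
  then show ?case by (simp add: word_aff_append)
next
  case (beq_rel u v)
  have "aff_comp (letter_aff m n (GT, True))
      (aff_comp (word_aff m n (apow m)) (aff_comp (letter_aff m n (GT, False)) f))
    = aff_comp (word_aff m n (apow n)) f" for f
    using assms(2,3) by (auto simp: aff_comp_def word_aff_apow bs_ratio_def field_simps)
  then show ?case by (simp add: word_aff_append)
qed auto

lemma word_aff_elt:
  "elt m n w = elt m n v \<Longrightarrow> m \<noteq> 0 \<Longrightarrow> n \<noteq> 0 \<Longrightarrow> word_aff m n w = word_aff m n v"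
  by (simp add: elt_eq_iff word_aff_beq)

lemma word_aff_scale_nonzero: "m \<noteq> 0 \<Longrightarrow> n \<noteq> 0 \<Longrightarrow> fst (word_aff m n w) \<noteq> 0"
proof (induction w)
  case (Cons l w)
  then have "bs_ratio m n \<noteq> 0" by (simp add: bs_ratio_def)
  with Cons show ?case by (cases l; cases "fst l"; cases "snd l") (auto simp: aff_comp_def)
qed simp

lemma abs_bs_ratio_gt_1: "m \<noteq> 0 \<Longrightarrow> \<bar>m\<bar> < \<bar>n\<bar> \<Longrightarrow> 1 < \<bar>bs_ratio m n\<bar>"
  by (simp add: bs_ratio_def divide_less_eq flip: of_int_abs)

lemma aline_meet_imp_scale_eq:
  assumes "aline m n h \<inter> aline m n g \<noteq> {}" and "m \<noteq> 0" and "n \<noteq> 0"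
  shows "fst (word_aff m n h) = fst (word_aff m n g)"
proof -
  obtain k k' where "elt m n (h @ apow k') = elt m n (g @ apow k)"
    using assms(1) by (auto simp: aline_def)
  from word_aff_elt[OF this assms(2,3)] show ?thesis
    by (simp add: word_aff_append word_aff_apow aff_comp_def)
qed

lemma bdd_above_powi_le:
  fixes r C :: real
  assumes "1 < r"
  shows "bdd_above {l :: int. r powi l \<le> C}"
proof -
  obtain N where N: "C < r ^ N" using real_arch_pow[OF assms] by blast
  have "l \<le> int N" if "r powi l \<le> C" for l
    using that N power_int_le_imp_le_exp[OF assms, of l "int N"] by simp
  then show ?thesis by (auto intro: bdd_aboveI[of _ "int N"])
qed

lemma lwalk_0_iff: "lwalk m n u v 0 \<longleftrightarrow> u = v \<and> u \<in> LVerts m n"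
  by (auto elim: lwalk.cases intro: lwalk.intros)

lemma lwalk_1_iff: "lwalk m n u v (Suc 0) \<longleftrightarrow> ladj m n u v"
proof
  assume "lwalk m n u v (Suc 0)"
  then show "ladj m n u v" by (cases rule: lwalk.cases) (auto simp: lwalk_0_iff)
next
  assume adj: "ladj m n u v"
  then have "lwalk m n v v 0" by (simp add: ladj_def lwalk.lwalk_nil)
  with adj show "lwalk m n u v (Suc 0)" by (rule lwalk.lwalk_cons)
qed

lemma lwalk_2_iff: "lwalk m n u v (Suc (Suc 0)) \<longleftrightarrow> (\<exists>w. ladj m n u w \<and> ladj m n w v)"
proof
  assume "lwalk m n u v (Suc (Suc 0))"
  then show "\<exists>w. ladj m n u w \<and> ladj m n w v" by (cases rule: lwalk.cases) (auto simp: lwalk_1_iff)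
next
  assume "\<exists>w. ladj m n u w \<and> ladj m n w v"
  then show "lwalk m n u v (Suc (Suc 0))" by (auto intro: lwalk.intros simp flip: lwalk_1_iff)
qed

lemma mem_lk_iff: "v \<in> lk m n u \<longleftrightarrow> ladj m n u v"
proof -
  have "v \<in> lk m n u \<longleftrightarrow> lwalk m n u v (Suc 0) \<and> \<not> lwalk m n u v 0"
    by (simp add: lk_def ldist_is_def)
  then show ?thesis
    by (auto simp: lwalk_0_iff lwalk_1_iff ladj_def)
qed

lemma ldist_2_iff:
  "ldist_is m n u v 2 \<longleftrightarrow> (\<exists>w. ladj m n u w \<and> ladj m n w v) \<and> u \<noteq> v \<and> \<not> ladj m n u v"
proof -
  have "ldist_is m n u v 2 \<longleftrightarrow>
      lwalk m n u v (Suc (Suc 0)) \<and> \<not> lwalk m n u v 0 \<and> \<not> lwalk m n u v (Suc 0)"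
    by (auto simp: ldist_is_def numeral_2_eq_2 less_Suc_eq)
  moreover have "u \<in> LVerts m n" if "lwalk m n u v (Suc (Suc 0))"
    using that by (auto simp: lwalk_2_iff ladj_def)
  ultimately show ?thesis
    by (auto simp: lwalk_0_iff lwalk_1_iff lwalk_2_iff)
qed

lemma not_ladj_alines: "\<not> ladj m n (TypeA, aline m n h) (TypeA, aline m n g)"
  by (simp add: ladj_def) (metis aline_eq_if_meet)

lemma lk_aline:
  assumes "x \<in> lk m n (TypeA, aline m n g)"
  obtains k where "x = (TypeT, tline m n (g @ apow k))"
proof -
  have adj: "ladj m n (TypeA, aline m n g) x" using assms mem_lk_iff by blast
  then have "x \<in> LVerts m n" by (simp add: ladj_def)
  then show ?thesis
  proof (cases rule: LVerts_cases)
    case (1 h)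
    with adj show ?thesis using not_ladj_alines by blast
  next
    case (2 h)
    with adj obtain k j where "elt m n (g @ apow k) = elt m n (h @ tpow j)"
      by (auto simp: ladj_def aline_def tline_def)
    then have "tline m n h \<inter> tline m n (g @ apow k) \<noteq> {}"
      using elt_in_tline[of m n h j] elt_in_tline_self[of m n "g @ apow k"] by (metis IntI empty_iff)
    then have "tline m n h = tline m n (g @ apow k)" by (rule tline_eq_if_meet)
    with 2 that show ?thesis by blast
  qed
qed

lemma tline_aline_ladj:
  "ladj m n (TypeT, tline m n g) (TypeA, aline m n (g @ tpow l))"
  using elt_in_tline[of m n g l] elt_in_aline_self[of m n "g @ tpow l"]
  by (simp add: ladj_def aline_in_LVerts tline_in_LVerts) blast

lemma aline_tline_ladj:
  "ladj m n (TypeA, aline m n g) (TypeT, tline m n (g @ apow k))"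
  using elt_in_aline[of m n g k] elt_in_tline_self[of m n "g @ apow k"]
  by (simp add: ladj_def aline_in_LVerts tline_in_LVerts) blast

section \<open>Vertices of type a\<close>

lemma ldist_2_aline_tinv:
  assumes "m \<noteq> 0" and "n \<noteq> 0" and "m \<noteq> n"
  shows "ldist_is m n (TypeA, aline m n g) (TypeA, aline m n (g @ apow i @ [(GT, False)])) 2"
proof -
  let ?v = "(TypeA, aline m n (g @ apow i @ [(GT, False)]))"
  have "fst (word_aff m n (g @ apow i @ [(GT, False)])) = fst (word_aff m n g) * (m / n)"
    by (simp add: word_aff_append word_aff_apow aff_comp_def bs_ratio_def)
  moreover have "real_of_int m / real_of_int n \<noteq> 1"
    using assms by simp
  ultimately have "fst (word_aff m n (g @ apow i @ [(GT, False)])) \<noteq> fst (word_aff m n g)"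
    using word_aff_scale_nonzero[OF assms(1,2), of g] by (metis mult_cancel_left1)
  then have "aline m n g \<noteq> aline m n (g @ apow i @ [(GT, False)])"
    using aline_meet_imp_scale_eq[OF _ assms(1,2)] elt_in_aline_self by blast
  then have "(TypeA, aline m n g) \<noteq> ?v" by simp
  moreover have "ladj m n (TypeT, tline m n (g @ apow i)) ?v"
    using tline_aline_ladj[of m n "g @ apow i" "-1"] by (simp add: tpow_eq_gpow gpow_minus_1)
  ultimately show ?thesis
    unfolding ldist_2_iff using aline_tline_ladj[of m n g i] not_ladj_alines by blast
qed

lemma tline_in_lk_aline_tinv:
  assumes "m \<noteq> 0"
  shows "(TypeT, tline m n (g @ apow k)) \<in> lk m n (TypeA, aline m n (g @ apow (k mod m) @ [(GT, False)]))"
proof -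
  have "beq m n (g @ apow (k mod m) @ (GT, False) # apow (n * (k div m)))
      (g @ apow (k mod m) @ apow (m * (k div m)) @ [(GT, False)])"
    using beq_append_left[OF beq_tinv_apow_mult, of m n "g @ apow (k mod m)"] by simp
  also have "beq m n \<dots> (g @ apow k @ [(GT, False)])"
    using beq_append_cong[OF gpow_add[of m n GA "k mod m" "m * (k div m)"], of g "[(GT, False)]"]
    by (simp add: apow_eq_gpow)
  finally have "elt m n ((g @ apow (k mod m) @ [(GT, False)]) @ apow (n * (k div m)))
      = elt m n ((g @ apow k) @ tpow (-1))"
    by (simp add: elt_eq_iff tpow_eq_gpow gpow_minus_1)
  then have "aline m n (g @ apow (k mod m) @ [(GT, False)]) \<inter> tline m n (g @ apow k) \<noteq> {}"
    using elt_in_aline[of m n "g @ apow (k mod m) @ [(GT, False)]" "n * (k div m)"]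
      elt_in_tline[of m n "g @ apow k" "-1"] by (metis IntI empty_iff)
  then show ?thesis
    by (simp add: mem_lk_iff ladj_def aline_in_LVerts tline_in_LVerts)
qed

lemma aline_lk_finitely_covered:
  fixes g :: word
  assumes "m \<noteq> 0" and "n \<noteq> 0" and "m \<noteq> n"
  defines "u \<equiv> (TypeA, aline m n g)"
  shows "\<exists>Vu. finite Vu \<and> Vu \<subseteq> LVerts m n \<and> (\<forall>v\<in>Vu. ldist_is m n u v 2)
          \<and> lk m n u \<subseteq> (\<Union>v\<in>Vu. lk m n v)"
proof (intro exI conjI)
  let ?V = "\<lambda>i. (TypeA, aline m n (g @ apow i @ [(GT, False)]))"
  show "finite (?V ` {-\<bar>m\<bar>..\<bar>m\<bar>})" by simp
  show "?V ` {-\<bar>m\<bar>..\<bar>m\<bar>} \<subseteq> LVerts m n" by (auto simp: aline_in_LVerts)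
  show "\<forall>v \<in> ?V ` {-\<bar>m\<bar>..\<bar>m\<bar>}. ldist_is m n u v 2"
    using ldist_2_aline_tinv[OF assms(1-3)] by (auto simp: u_def)
  show "lk m n u \<subseteq> (\<Union>v \<in> ?V ` {-\<bar>m\<bar>..\<bar>m\<bar>}. lk m n v)"
  proof
    fix x assume "x \<in> lk m n u"
    then obtain k where "x = (TypeT, tline m n (g @ apow k))"
      unfolding u_def by (rule lk_aline)
    moreover have "k mod m \<in> {-\<bar>m\<bar>..\<bar>m\<bar>}"
      using abs_mod_less[OF assms(1), of k] by auto
    ultimately show "x \<in> (\<Union>v \<in> ?V ` {-\<bar>m\<bar>..\<bar>m\<bar>}. lk m n v)"
      using tline_in_lk_aline_tinv[OF assms(1)] by blast
  qed
qed

section \<open>Vertices of type t\<close>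

lemma aline_meets_level_scale:
  assumes "aline m n h \<inter> aline m n (g @ tpow l) \<noteq> {}" and "m \<noteq> 0" and "n \<noteq> 0"
  shows "\<bar>bs_ratio m n\<bar> powi l = \<bar>fst (word_aff m n h)\<bar> / \<bar>fst (word_aff m n g)\<bar>"
proof -
  have "fst (word_aff m n h) = fst (word_aff m n g) * bs_ratio m n powi l"
    using aline_meet_imp_scale_eq[OF assms] by (simp add: word_aff_append word_aff_tpow aff_comp_def)
  then show ?thesis
    using word_aff_scale_nonzero[OF assms(2,3), of g] by (simp add: abs_mult power_int_abs)
qed

lemma tline_meets_level_shift:
  assumes "tline m n h \<inter> aline m n (g @ tpow l) \<noteq> {}" and "tline m n h \<noteq> tline m n g"
    and "m \<noteq> 0" and "n \<noteq> 0"
  shows "\<bar>bs_ratio m n\<bar> powi l \<le> \<bar>snd (word_aff m n h) - snd (word_aff m n g)\<bar> / \<bar>fst (word_aff m n g)\<bar>"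
proof -
  obtain i k where meet: "elt m n (h @ tpow i) = elt m n ((g @ tpow l) @ apow k)"
    using assms(1) by (auto simp: aline_def tline_def)
  have "k \<noteq> 0"
  proof
    assume "k = 0"
    with meet have "tline m n h \<inter> tline m n g \<noteq> {}"
      using elt_in_tline[of m n h i] elt_in_tline[of m n g l] by (auto simp: apow_def)
    then have "tline m n h = tline m n g" by (rule tline_eq_if_meet)
    with assms(2) show False ..
  qed
  have "snd (word_aff m n h) - snd (word_aff m n g) = fst (word_aff m n g) * bs_ratio m n powi l * k"
    using word_aff_elt[OF meet assms(3,4)]
    by (simp add: word_aff_append word_aff_apow word_aff_tpow aff_comp_def)
  then have "\<bar>snd (word_aff m n h) - snd (word_aff m n g)\<bar> / \<bar>fst (word_aff m n g)\<bar>
      = \<bar>bs_ratio m n\<bar> powi l * \<bar>of_int k\<bar>"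
    using word_aff_scale_nonzero[OF assms(3,4), of g] by (simp add: abs_mult power_int_abs)
  moreover have "\<bar>bs_ratio m n\<bar> powi l * 1 \<le> \<bar>bs_ratio m n\<bar> powi l * \<bar>of_int k\<bar>"
    by (rule mult_left_mono) (use \<open>k \<noteq> 0\<close> in auto)
  ultimately show ?thesis by simp
qed

lemma meets_levels_bdd_above:
  assumes "m \<noteq> 0" and "n \<noteq> 0" and "\<bar>m\<bar> < \<bar>n\<bar>"
    and "v \<in> LVerts m n" and "v \<noteq> (TypeT, tline m n g)"
  shows "bdd_above {l. snd v \<inter> aline m n (g @ tpow l) \<noteq> {}}"
proof -
  have "\<exists>C. \<forall>l. snd v \<inter> aline m n (g @ tpow l) \<noteq> {} \<longrightarrow> \<bar>bs_ratio m n\<bar> powi l \<le> C"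
    using assms(4)
  proof (cases rule: LVerts_cases)
    case (1 h)
    then show ?thesis
      using aline_meets_level_scale[OF _ assms(1,2)] by fastforce
  next
    case (2 h)
    with assms(5) have "tline m n h \<noteq> tline m n g" by simp
    with 2 show ?thesis
      using tline_meets_level_shift[OF _ _ assms(1,2)] by fastforce
  qed
  then obtain C where "{l. snd v \<inter> aline m n (g @ tpow l) \<noteq> {}} \<subseteq> {l. \<bar>bs_ratio m n\<bar> powi l \<le> C}"
    by blast
  then show ?thesis
    by (rule bdd_above_mono[OF bdd_above_powi_le[OF abs_bs_ratio_gt_1[OF assms(1,3)]]])
qed

lemma tline_lk_not_finitely_covered:
  assumes "m \<noteq> 0" and "n \<noteq> 0" and "\<bar>m\<bar> < \<bar>n\<bar>"
    and "finite Vu" and "Vu \<subseteq> LVerts m n" and "(TypeT, tline m n g) \<notin> Vu"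
  shows "\<not> lk m n (TypeT, tline m n g) \<subseteq> (\<Union>v\<in>Vu. lk m n v)"
proof
  assume cover: "lk m n (TypeT, tline m n g) \<subseteq> (\<Union>v\<in>Vu. lk m n v)"
  have "bdd_above {l. snd v \<inter> aline m n (g @ tpow l) \<noteq> {}}" if "v \<in> Vu" for v
    by (rule meets_levels_bdd_above[OF assms(1-3)]) (use that assms(5,6) in auto)
  with assms(4) have "bdd_above (\<Union>v\<in>Vu. {l. snd v \<inter> aline m n (g @ tpow l) \<noteq> {}})"
    by simp
  then obtain L where L: "\<And>v l. v \<in> Vu \<Longrightarrow> snd v \<inter> aline m n (g @ tpow l) \<noteq> {} \<Longrightarrow> l \<le> L"
    by (auto simp: bdd_above_def)
  have "(TypeA, aline m n (g @ tpow (L + 1))) \<in> lk m n (TypeT, tline m n g)"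
    using tline_aline_ladj mem_lk_iff by blast
  with cover obtain v where "v \<in> Vu" and "ladj m n v (TypeA, aline m n (g @ tpow (L + 1)))"
    by (auto simp: mem_lk_iff)
  then show False
    using L[of v "L + 1"] by (simp add: ladj_def)
qed

theorem lemma3p3:
  fixes m n :: int and u :: "ltype \<times> word set set"
  assumes "m \<noteq> 0" and "n \<noteq> 0" and "\<bar>m\<bar> < \<bar>n\<bar>"
    and "u \<in> LVerts m n"
  shows "fst u = TypeA \<longleftrightarrow>
    (\<exists>Vu. finite Vu \<and> Vu \<subseteq> LVerts m n \<and> (\<forall>v\<in>Vu. ldist_is m n u v 2)
          \<and> lk m n u \<subseteq> (\<Union>v\<in>Vu. lk m n v))"
  using assms(4)
proof (cases rule: LVerts_cases)
  case (1 g)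
  have "m \<noteq> n" using assms(3) by auto
  with 1 show ?thesis
    using aline_lk_finitely_covered[OF assms(1,2)] by simp
next
  case (2 g)
  have "u \<notin> Vu" if "\<forall>v\<in>Vu. ldist_is m n u v 2" for Vu
    using that by (auto simp: ldist_2_iff)
  with 2 show ?thesis
    using tline_lk_not_finitely_covered[OF assms(1-3)] by auto
qed

end
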